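(* For every integer $n>1$, $\mathrm{DE3}(n+2)+\mathrm{DE3}(n-1)$ equals the number of partitions of $n$ into parts none of which is divisible by $4$.
   Context: For a nonnegative integer $n$, $\mathrm{DE3}(n)$ denotes the number of partitions of $n$ in which no even part is repeated, and the largest part is odd and appears exactly once (so $\mathrm{DE3}(0)=0$). Equivalently, $\sum_{n\ge0}\mathrm{DE3}(n)q^n=\sum_{n\ge0}\frac{(-q^2;q^2)_n q^{2n+1}}{(q;q^2)_{n}}$, where $(a;q)_0=1$ and $(a;q)_n=\prod_{j=0}^{n-1}(1-aq^j)$. *)

theory Defs
  imports Main "HOL-Library.Multiset"
begin

definition nat_partitions :: "nat \<Rightarrow> nat multiset set" where
  "nat_partitions n = {p. (\<forall>x\<in>#p. 0 < x) \<and> sum_mset p = n}"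

text \<open>DE3(n): partitions of n in which no even part is repeated, and the largest part
  is odd and appears exactly once (the empty partition has no largest part, so DE3(0)=0).\<close>
definition DE3 :: "nat \<Rightarrow> nat" where
  "DE3 n = card {p \<in> nat_partitions n.
     (\<forall>x\<in>#p. even x \<longrightarrow> count p x \<le> 1) \<and>
     p \<noteq> {#} \<and> odd (Max_mset p) \<and> count p (Max_mset p) = 1}"

definition pnot4 :: "nat \<Rightarrow> nat" where
  "pnot4 n = card {p \<in> nat_partitions n. \<forall>x\<in>#p. \<not> 4 dvd x}"

end

theory Submission
  imports Defs
begin

(* Splitting every part 2^(k+1) m (m odd) into 2^k copies of 2m maps the partitions of n with
   distinct even parts onto the partitions of n with no part divisible by 4: it is injective
   because the multiplicity of 2m in the image is the binary number whose digits record which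
   parts 2^(k+1) m occur, and inserting parts with binary carries inverts it.
   A partition q of n with distinct even parts is then classified by whether the largest odd
   number c not exceeding its largest part occurs in q.  If it does, replacing c by c + 2 gives
   a DE3-partition of n + 2; if not, the largest part is c + 1, occurs once, and replacing it by
   c gives a DE3-partition of n - 1.  Both replacements are invertible. *)

definition distinct_even_partition :: "nat multiset \<Rightarrow> bool" where
  "distinct_even_partition p \<longleftrightarrow> (\<forall>x\<in>#p. 0 < x) \<and> (\<forall>x\<in>#p. even x \<longrightarrow> count p x \<le> 1)"

definition distinct_even_partitions :: "nat \<Rightarrow> nat multiset set" where
  "distinct_even_partitions n = {p. distinct_even_partition p \<and> sum_mset p = n}"

lemma mem_distinct_even_partitions [simp]:
  "p \<in> distinct_even_partitions n \<longleftrightarrow> distinct_even_partition p \<and> sum_mset p = n"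
  by (simp add: distinct_even_partitions_def)

lemma distinct_even_partition_empty [simp]: "distinct_even_partition {#}"
  by (simp add: distinct_even_partition_def)

lemma distinct_even_partition_add_mset_iff:
  "distinct_even_partition (add_mset a p) \<longleftrightarrow>
     0 < a \<and> distinct_even_partition p \<and> (even a \<longrightarrow> a \<notin># p)"
  unfolding distinct_even_partition_def by (auto simp: not_in_iff split: if_splits)

lemma count_distinct_even_partition:
  "distinct_even_partition p \<Longrightarrow> even y \<Longrightarrow> count p y = of_bool (y \<in># p)"
  unfolding distinct_even_partition_def by (auto simp: not_in_iff intro: le_antisym)

lemma pos_nat_odd_times_pow2_cases:
  assumes "0 < (x::nat)"
  obtains "odd x" | k m where "odd m" "x = 2 ^ k * (2 * m)"
proof -
  have "odd x \<or> (\<exists>k m. odd m \<and> x = 2 ^ k * (2 * m))"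
    using assms
  proof (induction x rule: less_induct)
    case (less x)
    show ?case
    proof (cases "odd x")
      case False
      then obtain y where y: "x = 2 * y" by blast
      with less.prems have "odd y \<or> (\<exists>k m. odd m \<and> y = 2 ^ k * (2 * m))"
        by (intro less.IH) auto
      then show ?thesis
      proof
        assume "odd y"
        then show ?thesis using y by (metis power_0 mult_1)
      next
        assume "\<exists>k m. odd m \<and> y = 2 ^ k * (2 * m)"
        then obtain k m where "odd m" "y = 2 ^ k * (2 * m)" by blast
        then have "odd m \<and> x = 2 ^ Suc k * (2 * m)" using y by simp
        then show ?thesis by blast
      qed
    qed simp
  qed
  then show thesis using that by blast
qed

lemma bit_sum_pow2_iff: "finite S \<Longrightarrow> bit (\<Sum>k\<in>S. 2 ^ k :: nat) j \<longleftrightarrow> j \<in> S"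
proof (induction S arbitrary: j rule: finite_induct)
  case (insert x S)
  then have "bit (2 ^ x + (\<Sum>k\<in>S. 2 ^ k :: nat)) j \<longleftrightarrow> bit (2 ^ x :: nat) j \<or> j \<in> S"
    by (subst bit_disjunctive_add_iff) (auto simp: bit_exp_iff)
  then show ?case using insert by (simp add: bit_exp_iff)
qed simp

function split_part :: "nat \<Rightarrow> nat multiset" where
  "split_part x = (if 0 < x \<and> 4 dvd x then split_part (x div 2) + split_part (x div 2) else {#x#})"
  by auto
termination by (relation "measure id") auto

declare split_part.simps [simp del]

lemma split_part_not_4_dvd: "\<not> 4 dvd x \<Longrightarrow> split_part x = {#x#}"
  by (subst split_part.simps) simp

lemma split_part_odd: "odd x \<Longrightarrow> split_part x = {#x#}"
  by (rule split_part_not_4_dvd) (auto dest: dvd_trans[of 2 4 x])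

lemma split_part_double: "0 < x \<Longrightarrow> even x \<Longrightarrow> split_part (2 * x) = split_part x + split_part x"
  by (subst split_part.simps) auto

lemma split_part_pow2_times_odd:
  assumes "odd m"
  shows "split_part (2 ^ k * (2 * m)) = replicate_mset (2 ^ k) (2 * m)"
proof (induction k)
  case 0
  have "\<not> 4 dvd 2 * m" using assms by auto
  then show ?case by (simp add: split_part_not_4_dvd)
next
  case (Suc k)
  have "0 < 2 ^ k * (2 * m)" using assms by (simp add: odd_pos)
  then have "split_part (2 ^ Suc k * (2 * m)) = split_part (2 ^ k * (2 * m)) + split_part (2 ^ k * (2 * m))"
    using split_part_double[of "2 ^ k * (2 * m)"] by (simp add: mult.assoc)
  then show ?case using Suc.IH by (auto intro: multiset_eqI)
qed

lemma sum_mset_split_part [simp]: "sum_mset (split_part x) = x"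
proof (induction x rule: split_part.induct)
  case (1 x)
  then show ?case by (subst split_part.simps) auto
qed

lemma split_part_parts: "0 < x \<Longrightarrow> y \<in># split_part x \<Longrightarrow> 0 < y \<and> \<not> 4 dvd y"
proof (induction x rule: split_part.induct)
  case (1 x)
  then show ?case by (subst (asm) split_part.simps) (auto split: if_splits)
qed

lemma count_split_part_odd: "odd y \<Longrightarrow> 0 < x \<Longrightarrow> count (split_part x) y = of_bool (x = y)"
  by (erule pos_nat_odd_times_pow2_cases) (auto simp: split_part_odd split_part_pow2_times_odd)

lemma count_split_part_double_odd:
  assumes "odd m" "0 < x" "\<forall>k. x \<noteq> 2 ^ k * (2 * m)"
  shows "count (split_part x) (2 * m) = 0"
  using assms(2) by (cases rule: pos_nat_odd_times_pow2_cases)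
    (use assms in \<open>auto simp: split_part_odd split_part_pow2_times_odd\<close>)

definition split_parts :: "nat multiset \<Rightarrow> nat multiset" where
  "split_parts p = (\<Sum>x\<in>#p. split_part x)"

lemma split_parts_empty [simp]: "split_parts {#} = {#}"
  by (simp add: split_parts_def)

lemma split_parts_add_mset [simp]: "split_parts (add_mset x p) = split_part x + split_parts p"
  by (simp add: split_parts_def)

lemma sum_mset_split_parts [simp]: "sum_mset (split_parts p) = sum_mset p"
  by (induction p) simp_all

lemma split_parts_parts: "\<forall>x\<in>#p. 0 < x \<Longrightarrow> y \<in># split_parts p \<Longrightarrow> 0 < y \<and> \<not> 4 dvd y"
  by (induction p) (auto dest: split_part_parts)

lemma count_split_parts_odd:
  "\<forall>x\<in>#p. 0 < x \<Longrightarrow> odd y \<Longrightarrow> count (split_parts p) y = count p y"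
  by (induction p) (auto simp: count_split_part_odd)

lemma finite_pow2_times_mem:
  assumes "0 < m"
  shows "finite {k. 2 ^ k * m \<in># (p :: nat multiset)}"
proof -
  have "inj (\<lambda>k. 2 ^ k * m)" using assms by (auto simp: inj_def)
  then show ?thesis using finite_vimageI[of "set_mset p" "\<lambda>k. 2 ^ k * m"] by (simp add: vimage_def)
qed

lemma count_split_parts_double_odd:
  assumes "distinct_even_partition p" "odd m"
  shows "count (split_parts p) (2 * m) = (\<Sum>k | 2 ^ k * (2 * m) \<in># p. 2 ^ k)"
  using assms(1)
proof (induction p)
  case (add x p)
  have p: "distinct_even_partition p" "0 < x" "even x \<Longrightarrow> x \<notin># p"
    using add.prems by (auto simp: distinct_even_partition_add_mset_iff)
  have fin: "finite {k. 2 ^ k * (2 * m) \<in># p}"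
    using assms(2) by (intro finite_pow2_times_mem) (simp add: odd_pos)
  show ?case
  proof (cases "\<exists>k. x = 2 ^ k * (2 * m)")
    case True
    then obtain k where k: "x = 2 ^ k * (2 * m)" by blast
    have "{j. 2 ^ j * (2 * m) \<in># add_mset x p} = insert k {j. 2 ^ j * (2 * m) \<in># p}"
      using k assms(2) by (auto simp: odd_pos)
    moreover have "k \<notin> {j. 2 ^ j * (2 * m) \<in># p}" using p(3) k by simp
    ultimately show ?thesis
      using k add.IH p(1) fin by (simp add: split_part_pow2_times_odd[OF assms(2)])
  next
    case False
    then have "{j. 2 ^ j * (2 * m) \<in># add_mset x p} = {j. 2 ^ j * (2 * m) \<in># p}" by auto
    then show ?thesis
      using False add.IH p(1,2) assms(2) by (simp add: count_split_part_double_odd)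
  qed
qed simp

lemma mem_iff_bit_count_split_parts:
  assumes "distinct_even_partition p" "odd m"
  shows "2 ^ k * (2 * m) \<in># p \<longleftrightarrow> bit (count (split_parts p) (2 * m)) k"
  using assms finite_pow2_times_mem[of "2 * m" p]
  by (simp add: count_split_parts_double_odd bit_sum_pow2_iff odd_pos)

lemma inj_on_split_parts: "inj_on split_parts {p. distinct_even_partition p}"
proof (rule inj_onI, rule multiset_eqI)
  fix p q y
  assume "p \<in> {p. distinct_even_partition p}" "q \<in> {p. distinct_even_partition p}"
  then have p: "distinct_even_partition p" and q: "distinct_even_partition q" by simp_all
  assume eq: "split_parts p = split_parts q"
  have pos: "\<forall>x\<in>#p. 0 < x" "\<forall>x\<in>#q. 0 < x"
    using p q by (simp_all add: distinct_even_partition_def)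
  show "count p y = count q y"
  proof (cases "y = 0")
    case True
    then show ?thesis using pos by (metis count_eq_zero_iff less_irrefl)
  next
    case False
    then have "0 < y" by simp
    then show ?thesis
    proof (cases rule: pos_nat_odd_times_pow2_cases)
      case 1
      then show ?thesis using eq pos by (metis count_split_parts_odd)
    next
      case (2 k m)
      then have "y \<in># p \<longleftrightarrow> y \<in># q"
        using eq mem_iff_bit_count_split_parts[OF p] mem_iff_bit_count_split_parts[OF q] by simp
      then show ?thesis using 2 p q by (simp add: count_distinct_even_partition)
    qed
  qed
qed

function merge_insert :: "nat multiset \<Rightarrow> nat \<Rightarrow> nat multiset" where
  "merge_insert p x = (if even x \<and> x \<in># p then merge_insert (p - {#x#}) (2 * x) else add_mset x p)"
  by auto
termination by (relation "measure (\<lambda>(p, x). size p)") (auto simp: size_Diff1_less)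

declare merge_insert.simps [simp del]

lemma distinct_even_partition_merge_insert:
  "distinct_even_partition p \<Longrightarrow> 0 < x \<Longrightarrow> distinct_even_partition (merge_insert p x)"
proof (induction p x rule: merge_insert.induct)
  case (1 p x)
  then show ?case
    by (subst merge_insert.simps)
      (auto simp: distinct_even_partition_add_mset_iff dest: multi_member_split)
qed

lemma split_parts_merge_insert:
  "0 < x \<Longrightarrow> split_parts (merge_insert p x) = split_parts p + split_part x"
proof (induction p x rule: merge_insert.induct)
  case (1 p x)
  show ?case
  proof (cases "even x \<and> x \<in># p")
    case True
    then obtain r where "p = add_mset x r" by (metis multi_member_split)
    then show ?thesis using 1 True
      by (subst merge_insert.simps) (simp add: split_part_double add.assoc)
  next
    case False
    then show ?thesis by (subst merge_insert.simps) (auto simp: add.commute)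
  qed
qed

lemma split_parts_surj:
  "\<forall>y\<in>#q. 0 < y \<and> \<not> 4 dvd y \<Longrightarrow> \<exists>p. distinct_even_partition p \<and> split_parts p = q"
proof (induction q)
  case (add x q)
  then obtain p where p: "distinct_even_partition p" "split_parts p = q" by auto
  have "0 < x" "\<not> 4 dvd x" using add.prems by auto
  then have "distinct_even_partition (merge_insert p x) \<and> split_parts (merge_insert p x) = add_mset x q"
    using p by (simp add: distinct_even_partition_merge_insert split_parts_merge_insert split_part_not_4_dvd)
  then show ?case by blast
qed (use distinct_even_partition_empty split_parts_empty in blast)

lemma bij_betw_split_parts:
  "bij_betw split_parts (distinct_even_partitions n) {q \<in> nat_partitions n. \<forall>x\<in>#q. \<not> 4 dvd x}"
proof (rule bij_betw_imageI)
  show "inj_on split_parts (distinct_even_partitions n)"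
    by (rule inj_on_subset[OF inj_on_split_parts]) (auto simp: distinct_even_partitions_def)
  show "split_parts ` distinct_even_partitions n = {q \<in> nat_partitions n. \<forall>x\<in>#q. \<not> 4 dvd x}"
  proof (intro equalityI subsetI)
    fix q assume "q \<in> split_parts ` distinct_even_partitions n"
    then show "q \<in> {q \<in> nat_partitions n. \<forall>x\<in>#q. \<not> 4 dvd x}"
      by (auto simp: distinct_even_partitions_def distinct_even_partition_def nat_partitions_def
          dest: split_parts_parts)
  next
    fix q assume q: "q \<in> {q \<in> nat_partitions n. \<forall>x\<in>#q. \<not> 4 dvd x}"
    then obtain p where "distinct_even_partition p" "split_parts p = q"
      using split_parts_surj[of q] by (auto simp: nat_partitions_def)
    with q show "q \<in> split_parts ` distinct_even_partitions n"
      by (auto simp: distinct_even_partitions_def nat_partitions_def)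
  qed
qed

lemma pnot4_eq_card_distinct_even_partitions: "pnot4 n = card (distinct_even_partitions n)"
  unfolding pnot4_def by (rule bij_betw_same_card[OF bij_betw_split_parts, symmetric])

definition de3_partitions :: "nat \<Rightarrow> nat multiset set" where
  "de3_partitions N = {p \<in> distinct_even_partitions N.
     p \<noteq> {#} \<and> odd (Max_mset p) \<and> count p (Max_mset p) = 1}"

lemma DE3_eq_card_de3_partitions: "DE3 N = card (de3_partitions N)"
  unfolding DE3_def de3_partitions_def distinct_even_partitions_def
    distinct_even_partition_def nat_partitions_def
  by (rule arg_cong[where f = card]) auto

lemma Max_mset_add_mset_upper: "\<forall>y\<in>#r. y \<le> a \<Longrightarrow> Max_mset (add_mset a r) = (a::nat)"
  by (rule Max_eqI) auto

lemma de3_partitionsE: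
  assumes "p \<in> de3_partitions N"
  obtains r where "p = add_mset (Max_mset p) r" "odd (Max_mset p)" "\<forall>y\<in>#r. y < Max_mset p"
    "distinct_even_partition r" "sum_mset r + Max_mset p = N"
proof
  let ?M = "Max_mset p"
  have p: "distinct_even_partition p" "sum_mset p = N" "p \<noteq> {#}" "odd ?M" "count p ?M = 1"
    using assms by (auto simp: de3_partitions_def)
  show pr: "p = add_mset ?M (p - {#?M#})"
    using p(3) by (simp add: Max_in)
  show "\<forall>y\<in>#p - {#?M#}. y < ?M"
  proof
    fix y assume y: "y \<in># p - {#?M#}"
    then have "y \<le> ?M" by (simp add: in_diffD)
    moreover have "y \<noteq> ?M"
    proof
      assume "y = ?M"
      with y have "1 < count p ?M" by (simp add: in_diff_count)
      with p(5) show False by simp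
    qed
    ultimately show "y < ?M" by simp
  qed
  show "distinct_even_partition (p - {#?M#})"
    using p(1) pr distinct_even_partition_add_mset_iff by metis
  show "sum_mset (p - {#?M#}) + ?M = N"
    using p(2) pr by (metis add.commute sum_mset.add_mset)
qed (use assms in \<open>auto simp: de3_partitions_def\<close>)

lemma add_mset_in_de3_partitions:
  assumes "odd M" "\<forall>y\<in>#r. y < M" "distinct_even_partition r" "sum_mset r + M = N"
  shows "add_mset M r \<in> de3_partitions N"
proof -
  have "Max_mset (add_mset M r) = M"
    by (rule Max_mset_add_mset_upper) (use assms(2) in fastforce)
  moreover have "M \<notin># r" using assms(2) by blast
  ultimately show ?thesis
    using assms by (auto simp: de3_partitions_def distinct_even_partition_add_mset_iff odd_pos not_in_iff)
qed

definition replace_Max :: "(nat \<Rightarrow> nat) \<Rightarrow> nat multiset \<Rightarrow> nat multiset" where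
  "replace_Max f p = add_mset (f (Max_mset p)) (p - {#Max_mset p#})"

lemma replace_Max_add_mset:
  "\<forall>y\<in>#r. y \<le> M \<Longrightarrow> replace_Max f (add_mset M r) = add_mset (f M) r"
proof -
  assume "\<forall>y\<in>#r. y \<le> M"
  then have "Max_mset (add_mset M r) = M" by (rule Max_mset_add_mset_upper)
  then show ?thesis by (simp add: replace_Max_def)
qed

definition odd_floor_Max :: "nat multiset \<Rightarrow> nat" where
  "odd_floor_Max q = (if odd (Max_mset q) then Max_mset q else Max_mset q - 1)"

lemma odd_floor_Max_add_mset:
  assumes "odd a" "\<forall>y\<in>#s. y \<le> Suc a"
  shows "odd_floor_Max (add_mset a s) = a"
proof -
  let ?M = "Max_mset (add_mset a s)"
  have "a \<le> ?M" "?M \<le> Suc a" using assms(2) by (auto intro: Max_ge simp: Max_le_iff)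
  then have "?M = a \<or> ?M = Suc a" by linarith
  then show ?thesis using assms(1) unfolding odd_floor_Max_def by auto
qed

lemma odd_floor_Max_bounds:
  assumes "distinct_even_partition q" "q \<noteq> {#}"
  shows "odd (odd_floor_Max q)" "\<forall>y\<in>#q. y \<le> Suc (odd_floor_Max q)"
proof -
  have pos: "0 < Max_mset q"
    using assms Max_in[of "set_mset q"] by (auto simp: distinct_even_partition_def)
  then show "odd (odd_floor_Max q)" unfolding odd_floor_Max_def by presburger
  show "\<forall>y\<in>#q. y \<le> Suc (odd_floor_Max q)"
  proof
    fix y assume "y \<in># q"
    then have "y \<le> Max_mset q" by simp
    then show "y \<le> Suc (odd_floor_Max q)" using pos unfolding odd_floor_Max_def by auto
  qed
qed

definition raise_odd_floor_Max :: "nat multiset \<Rightarrow> nat multiset" where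
  "raise_odd_floor_Max q = add_mset (odd_floor_Max q + 2) (q - {#odd_floor_Max q#})"

lemma lower_Max_by_two_mem:
  assumes "p \<in> de3_partitions (n + 2)"
  shows "replace_Max (\<lambda>M. M - 2) p \<in> {q \<in> distinct_even_partitions n. odd_floor_Max q \<in># q}"
    and "raise_odd_floor_Max (replace_Max (\<lambda>M. M - 2) p) = p"
proof -
  define M where "M = Max_mset p"
  obtain r where p: "p = add_mset M r" "odd M" "\<forall>y\<in>#r. y < M"
      "distinct_even_partition r" "sum_mset r + M = n + 2"
    using de3_partitionsE[OF assms] unfolding M_def by blast
  have "M \<noteq> 1"
  proof
    assume "M = 1"
    with p(3,4) have "set_mset r = {}" by (fastforce simp: distinct_even_partition_def)
    with p(5) \<open>M = 1\<close> show False by simp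
  qed
  with p(2) have M3: "3 \<le> M" by presburger
  have q: "replace_Max (\<lambda>M. M - 2) p = add_mset (M - 2) r"
    using p(1,3) by (simp add: replace_Max_add_mset less_imp_le)
  have c: "odd_floor_Max (add_mset (M - 2) r) = M - 2"
    using p(2,3) M3 by (intro odd_floor_Max_add_mset) auto
  show "replace_Max (\<lambda>M. M - 2) p \<in> {q \<in> distinct_even_partitions n. odd_floor_Max q \<in># q}"
    unfolding q using c p(2,4,5) M3 by (simp add: distinct_even_partition_add_mset_iff)
  show "raise_odd_floor_Max (replace_Max (\<lambda>M. M - 2) p) = p"
    unfolding q raise_odd_floor_Max_def c using p(1) M3 by simp
qed

lemma raise_odd_floor_Max_mem:
  assumes "q \<in> distinct_even_partitions n" "odd_floor_Max q \<in># q"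
  shows "raise_odd_floor_Max q \<in> de3_partitions (n + 2)"
    and "replace_Max (\<lambda>M. M - 2) (raise_odd_floor_Max q) = q"
proof -
  define c where "c = odd_floor_Max q"
  define s where "s = q - {#c#}"
  have q: "distinct_even_partition q" "sum_mset q = n" "q = add_mset c s"
    using assms unfolding c_def s_def by auto
  have "q \<noteq> {#}" using q(3) by simp
  then have c: "odd c" "\<forall>y\<in>#q. y \<le> Suc c"
    using odd_floor_Max_bounds[OF q(1)] unfolding c_def by auto
  have s: "\<forall>y\<in>#s. y < c + 2" using c(2) q(3) by auto
  have "add_mset (c + 2) s \<in> de3_partitions (n + 2)"
    using c(1) s q by (intro add_mset_in_de3_partitions) (auto simp: distinct_even_partition_add_mset_iff)
  then show "raise_odd_floor_Max q \<in> de3_partitions (n + 2)"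
    unfolding raise_odd_floor_Max_def c_def s_def .
  have "replace_Max (\<lambda>M. M - 2) (add_mset (c + 2) s) = q"
    using s q(3) by (simp add: replace_Max_add_mset less_imp_le)
  then show "replace_Max (\<lambda>M. M - 2) (raise_odd_floor_Max q) = q"
    unfolding raise_odd_floor_Max_def c_def s_def .
qed

lemma raise_Max_by_one_mem:
  assumes "p \<in> de3_partitions (n - 1)" "0 < n"
  shows "replace_Max Suc p \<in> {q \<in> distinct_even_partitions n. odd_floor_Max q \<notin># q}"
    and "replace_Max (\<lambda>M. M - 1) (replace_Max Suc p) = p"
proof -
  define M where "M = Max_mset p"
  obtain r where p: "p = add_mset M r" "odd M" "\<forall>y\<in>#r. y < M"
      "distinct_even_partition r" "sum_mset r + M = n - 1"
    using de3_partitionsE[OF assms(1)] unfolding M_def by blast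
  have q: "replace_Max Suc p = add_mset (Suc M) r"
    using p(1,3) by (simp add: replace_Max_add_mset less_imp_le)
  have "Max_mset (add_mset (Suc M) r) = Suc M"
    using p(3) by (intro Max_mset_add_mset_upper) auto
  then have c: "odd_floor_Max (add_mset (Suc M) r) = M"
    using p(2) by (simp add: odd_floor_Max_def)
  show "replace_Max Suc p \<in> {q \<in> distinct_even_partitions n. odd_floor_Max q \<notin># q}"
    unfolding q using c p(3,4,5) assms(2) by (auto simp: distinct_even_partition_add_mset_iff)
  have "\<forall>y\<in>#r. y \<le> Suc M" using p(3) by auto
  then show "replace_Max (\<lambda>M. M - 1) (replace_Max Suc p) = p"
    unfolding q using p(1) by (simp add: replace_Max_add_mset)
qed

lemma lower_Max_by_one_mem:
  assumes "q \<in> distinct_even_partitions n" "odd_floor_Max q \<notin># q" "0 < n"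
  shows "replace_Max (\<lambda>M. M - 1) q \<in> de3_partitions (n - 1)"
    and "replace_Max Suc (replace_Max (\<lambda>M. M - 1) q) = q"
proof -
  define M where "M = Max_mset q"
  define s where "s = q - {#M#}"
  have q: "distinct_even_partition q" "sum_mset q = n" using assms(1) by auto
  with assms(3) have "q \<noteq> {#}" by auto
  then have "M \<in># q" unfolding M_def by simp
  then have qs: "q = add_mset M s" unfolding s_def by simp
  have "odd_floor_Max q \<noteq> M" using assms(2) \<open>M \<in># q\<close> by auto
  then have "even M" unfolding odd_floor_Max_def M_def by (auto split: if_splits)
  moreover from this have "M - 1 \<notin># q" using assms(2) unfolding odd_floor_Max_def M_def by auto
  ultimately have M: "even M" "M - 1 \<notin># q" by blast+
  have "0 < M" using q(1) \<open>M \<in># q\<close> by (auto simp: distinct_even_partition_def)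
  with M(1) have M2: "2 \<le> M" by presburger
  have "M \<notin># s" using q(1) qs M(1) by (simp add: distinct_even_partition_add_mset_iff)
  have s: "\<forall>y\<in>#s. y < M - 1"
  proof
    fix y assume y: "y \<in># s"
    then have "y \<in># q" unfolding s_def by (rule in_diffD)
    then have "y \<le> M" "y \<noteq> M - 1" using M(2) unfolding M_def by auto
    moreover have "y \<noteq> M" using y \<open>M \<notin># s\<close> by auto
    ultimately show "y < M - 1" by linarith
  qed
  have "add_mset (M - 1) s \<in> de3_partitions (n - 1)"
    using M M2 s q qs by (intro add_mset_in_de3_partitions)
      (auto simp: distinct_even_partition_add_mset_iff)
  moreover have "replace_Max (\<lambda>M. M - 1) q = add_mset (M - 1) s"
    unfolding replace_Max_def M_def s_def ..
  ultimately show "replace_Max (\<lambda>M. M - 1) q \<in> de3_partitions (n - 1)" by simp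
  show "replace_Max Suc (replace_Max (\<lambda>M. M - 1) q) = q"
    unfolding \<open>replace_Max (\<lambda>M. M - 1) q = add_mset (M - 1) s\<close>
    using s qs M2 by (simp add: replace_Max_add_mset less_imp_le)
qed

lemma bij_betw_lower_Max_by_two:
  "bij_betw (replace_Max (\<lambda>M. M - 2)) (de3_partitions (n + 2))
     {q \<in> distinct_even_partitions n. odd_floor_Max q \<in># q}"
  by (rule bij_betw_byWitness[where f' = raise_odd_floor_Max])
    (use lower_Max_by_two_mem raise_odd_floor_Max_mem in blast)+

lemma bij_betw_raise_Max_by_one:
  "0 < n \<Longrightarrow> bij_betw (replace_Max Suc) (de3_partitions (n - 1))
     {q \<in> distinct_even_partitions n. odd_floor_Max q \<notin># q}"
  by (rule bij_betw_byWitness[where f' = "replace_Max (\<lambda>M. M - 1)"])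
    (use raise_Max_by_one_mem lower_Max_by_one_mem in blast)+

lemma finite_nat_partitions: "finite (nat_partitions n)"
proof (rule finite_subset)
  show "nat_partitions n \<subseteq> (\<Union>k\<le>n. multisets_of_size {1..n} k)"
  proof
    fix p assume "p \<in> nat_partitions n"
    then have p: "\<forall>x\<in>#p. 0 < x" "sum_mset p = n" by (auto simp: nat_partitions_def)
    have "set_mset p \<subseteq> {1..n}"
      using p by (auto simp: Suc_le_eq dest!: multi_member_split)
    moreover have "size p \<le> sum_mset p"
      using p(1) by (induction p) auto
    ultimately show "p \<in> (\<Union>k\<le>n. multisets_of_size {1..n} k)"
      using p(2) by (auto simp: multisets_of_size_def)
  qed
qed auto

lemma card_distinct_even_partitions:
  assumes "0 < n"
  shows "card (distinct_even_partitions n) = DE3 (n + 2) + DE3 (n - 1)"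
proof -
  have "finite (distinct_even_partitions n)"
    by (rule finite_subset[OF _ finite_nat_partitions])
      (auto simp: nat_partitions_def distinct_even_partition_def)
  then have "card (distinct_even_partitions n) =
      card {q \<in> distinct_even_partitions n. odd_floor_Max q \<in># q} +
      card {q \<in> distinct_even_partitions n. odd_floor_Max q \<notin># q}"
    using card_Int_Diff[of _ "{q. odd_floor_Max q \<in># q}"] by (simp add: Int_def set_diff_eq)
  also have "\<dots> = DE3 (n + 2) + DE3 (n - 1)"
    using bij_betw_same_card[OF bij_betw_lower_Max_by_two] bij_betw_same_card[OF bij_betw_raise_Max_by_one[OF assms]]
    by (simp add: DE3_eq_card_de3_partitions)
  finally show ?thesis .
qed

theorem corollary3:
  fixes n :: nat
  assumes "n > 1"
  shows "DE3 (n + 2) + DE3 (n - 1) = pnot4 n"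
  using assms by (simp add: card_distinct_even_partitions pnot4_eq_card_distinct_even_partitions)

end
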